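(* Let $G = H_1 \cup \dots \cup H_k$ be a finite simple graph whose connected components are $H_1,\dots,H_k$, where at most one $H_i$ is isomorphic to $K_1$ and no $H_i$ is isomorphic to $K_2$. Let $P$ be the collection of components $H_i$ with $\det'(H_i) > 0$, let $Q$ be the collection of components $H_i$ with $\det'(H_i) = 0$ (counted with multiplicity, i.e. $|Q|$ is the number of indices $i$ with $\det'(H_i)=0$), and let $R$ be the set of isomorphism classes of graphs occurring in $Q$. Then \[\det'(G) = |Q| - |R| + \sum_{H \in P} \det'(H).\]
   Context: All graphs are finite and simple. An automorphism of $G$ is a bijection $\phi: V(G)\to V(G)$ preserving adjacency and non-adjacency; $\mathrm{Aut}(G)$ is the automorphism group. An automorphism $\phi$ fixes an edge $\{u,v\}$ if $\{\phi(u),\phi(v)\}=\{u,v\}$. For a graph $G$ with at most one isolated vertex and no component isomorphic to $K_2$, an edge subset $T\subseteq E(G)$ is an edge determining set if the only $\phi\in\mathrm{Aut}(G)$ satisfying $\{\phi(u),\phi(v)\}=\{u,v\}$ for all $\{u,v\}\in T$ is the identity; the determining index $\det'(G)$ is the minimum size of an edge determining set (it is $0$ if $G$ has only the trivial automorphism). *)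

theory Defs
  imports Main
begin

definition simple_graph :: "'a set \<Rightarrow> 'a set set \<Rightarrow> bool" where
  "simple_graph V E \<longleftrightarrow> finite V \<and>
     (\<forall>e\<in>E. \<exists>u v. u \<noteq> v \<and> u \<in> V \<and> v \<in> V \<and> e = {u, v})"

definition is_aut :: "'a set \<Rightarrow> 'a set set \<Rightarrow> ('a \<Rightarrow> 'a) \<Rightarrow> bool" where
  "is_aut V E \<phi> \<longleftrightarrow> bij_betw \<phi> V V \<and> (\<forall>x. x \<notin> V \<longrightarrow> \<phi> x = x) \<and>
     (\<forall>u\<in>V. \<forall>v\<in>V. {u, v} \<in> E \<longleftrightarrow> {\<phi> u, \<phi> v} \<in> E)"

definition fixes_edge :: "('a \<Rightarrow> 'a) \<Rightarrow> 'a set \<Rightarrow> bool" where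
  "fixes_edge \<phi> e \<longleftrightarrow> \<phi> ` e = e"

definition edge_determining :: "'a set \<Rightarrow> 'a set set \<Rightarrow> 'a set set \<Rightarrow> bool" where
  "edge_determining V E T \<longleftrightarrow> T \<subseteq> E \<and>
     (\<forall>\<phi>. is_aut V E \<phi> \<and> (\<forall>e\<in>T. fixes_edge \<phi> e) \<longrightarrow> \<phi> = id)"

definition det_index :: "'a set \<Rightarrow> 'a set set \<Rightarrow> nat" where
  "det_index V E = (LEAST n. \<exists>T. edge_determining V E T \<and> card T = n)"

definition adj_rel :: "'a set set \<Rightarrow> ('a \<times> 'a) set" where
  "adj_rel E = {(u, v). {u, v} \<in> E}"

definition components :: "'a set \<Rightarrow> 'a set set \<Rightarrow> 'a set set" where
  "components V E = (\<lambda>v. {u. (v, u) \<in> (adj_rel E)\<^sup>*}) ` V"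

definition induced_edges :: "'a set set \<Rightarrow> 'a set \<Rightarrow> 'a set set" where
  "induced_edges E C = {e \<in> E. e \<subseteq> C}"

definition graph_iso :: "'a set \<Rightarrow> 'a set set \<Rightarrow> 'b set \<Rightarrow> 'b set set \<Rightarrow> bool" where
  "graph_iso V1 E1 V2 E2 \<longleftrightarrow> (\<exists>f. bij_betw f V1 V2 \<and>
     (\<forall>u\<in>V1. \<forall>v\<in>V1. {u, v} \<in> E1 \<longleftrightarrow> {f u, f v} \<in> E2))"

definition is_complete_graph :: "nat \<Rightarrow> 'a set \<Rightarrow> 'a set set \<Rightarrow> bool" where
  "is_complete_graph n V E \<longleftrightarrow> card V = n \<and> finite V \<and>
     E = {e. \<exists>u v. u \<noteq> v \<and> u \<in> V \<and> v \<in> V \<and> e = {u, v}}"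

end

theory Submission
  imports Defs
begin

text \<open>An edge determining set \<open>T\<close> of \<open>G\<close> restricts to an edge determining set of every
  component, and an automorphism may swap two isomorphic components containing no edge of \<open>T\<close>.
  Hence \<open>T\<close> has at least \<open>det'(C)\<close> edges in every \<open>C \<in> P\<close> and meets all components of \<open>Q\<close>
  except at most one per isomorphism class, so \<open>|T| \<ge> \<Sum>\<^sub>P det'(C) + |Q| - |R|\<close>.
  Conversely, take optimal determining sets of the components in \<open>P\<close> and one edge in every
  component of \<open>Q\<close> except a representative of each class. An automorphism fixing these edges
  maps each component onto itself (the representatives are pairwise non-isomorphic) and is then
  trivial on it. The hypotheses on \<open>K\<^sub>1\<close> and \<open>K\<^sub>2\<close> make \<open>E(G)\<close> itself determining, so all
  indices are attained, and give every non-representative component of \<open>Q\<close> an edge.\<close>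

section \<open>Automorphisms, isomorphisms and the determining index\<close>

lemma fixes_edgeI: "(\<And>x. x \<in> e \<Longrightarrow> \<phi> x = x) \<Longrightarrow> fixes_edge \<phi> e"
  by (simp add: fixes_edge_def)

lemma fixes_edge_doubletonD: "fixes_edge \<phi> {v, a} \<Longrightarrow> \<phi> v = v \<or> \<phi> v = a"
  by (auto simp: fixes_edge_def)

lemma is_aut_inj_on: "is_aut V E \<phi> \<Longrightarrow> inj_on \<phi> V"
  by (simp add: is_aut_def bij_betw_def)

lemma is_aut_image: "is_aut V E \<phi> \<Longrightarrow> \<phi> ` V = V"
  by (simp add: is_aut_def bij_betw_def)

lemma is_aut_mem: "is_aut V E \<phi> \<Longrightarrow> x \<in> V \<Longrightarrow> \<phi> x \<in> V"
  using is_aut_image by blast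

lemma is_aut_outside: "is_aut V E \<phi> \<Longrightarrow> x \<notin> V \<Longrightarrow> \<phi> x = x"
  by (simp add: is_aut_def)

lemma is_aut_adj:
  "is_aut V E \<phi> \<Longrightarrow> u \<in> V \<Longrightarrow> v \<in> V \<Longrightarrow> {\<phi> u, \<phi> v} \<in> E \<longleftrightarrow> {u, v} \<in> E"
  by (simp add: is_aut_def)

lemma is_aut_eq_id: "is_aut V E \<phi> \<Longrightarrow> (\<And>x. x \<in> V \<Longrightarrow> \<phi> x = x) \<Longrightarrow> \<phi> = id"
  using is_aut_outside by fastforce

lemma is_aut_inverse:
  assumes \<phi>: "is_aut V E \<phi>"
  obtains \<psi> where "is_aut V E \<psi>" "\<And>x. x \<in> V \<Longrightarrow> \<phi> (\<psi> x) = x" "\<And>x. x \<in> V \<Longrightarrow> \<psi> (\<phi> x) = x"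
proof
  let ?\<psi> = "\<lambda>x. if x \<in> V then inv_into V \<phi> x else x"
  have bij: "bij_betw \<phi> V V"
    using \<phi> by (simp add: is_aut_def)
  have \<psi>V: "?\<psi> x \<in> V" if "x \<in> V" for x
    using that bij_betw_apply[OF bij_betw_inv_into[OF bij]] by simp
  show \<phi>\<psi>: "\<phi> (?\<psi> x) = x" if "x \<in> V" for x
    using that bij_betw_inv_into_right[OF bij] by simp
  show "?\<psi> (\<phi> x) = x" if "x \<in> V" for x
    using that is_aut_mem[OF \<phi> that] bij_betw_inv_into_left[OF bij] by simp
  have "bij_betw ?\<psi> V V"
    using bij_betw_inv_into[OF bij] by (rule bij_betw_cong[THEN iffD1, rotated]) simp
  moreover have "{u, v} \<in> E \<longleftrightarrow> {?\<psi> u, ?\<psi> v} \<in> E" if "u \<in> V" "v \<in> V" for u v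
    using is_aut_adj[OF \<phi> \<psi>V[OF that(1)] \<psi>V[OF that(2)]] \<phi>\<psi> that by simp
  ultimately show "is_aut V E ?\<psi>"
    by (simp add: is_aut_def)
qed

lemma graph_iso_refl: "graph_iso A E1 A E1"
  unfolding graph_iso_def by (rule exI[of _ id]) simp

lemma graph_iso_sym:
  assumes "graph_iso A E1 B E2"
  shows "graph_iso B E2 A E1"
proof -
  obtain f where f: "bij_betw f A B" and adj: "\<forall>u\<in>A. \<forall>v\<in>A. {u, v} \<in> E1 \<longleftrightarrow> {f u, f v} \<in> E2"
    using assms unfolding graph_iso_def by blast
  let ?g = "inv_into A f"
  have g: "bij_betw ?g B A"
    using f by (rule bij_betw_inv_into)
  have "?g x \<in> A" "f (?g x) = x" if "x \<in> B" for x
    using g f that by (auto simp: bij_betw_inv_into_right bij_betw_apply)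
  then have "{u, v} \<in> E2 \<longleftrightarrow> {?g u, ?g v} \<in> E1" if "u \<in> B" "v \<in> B" for u v
    using adj that by metis
  then show ?thesis
    unfolding graph_iso_def using g by blast
qed

lemma graph_iso_trans:
  assumes "graph_iso A E1 B E2" "graph_iso B E2 C E3"
  shows "graph_iso A E1 C E3"
proof -
  obtain f where f: "bij_betw f A B" and f_adj: "\<forall>u\<in>A. \<forall>v\<in>A. {u, v} \<in> E1 \<longleftrightarrow> {f u, f v} \<in> E2"
    using assms(1) unfolding graph_iso_def by blast
  obtain h where h: "bij_betw h B C" and h_adj: "\<forall>u\<in>B. \<forall>v\<in>B. {u, v} \<in> E2 \<longleftrightarrow> {h u, h v} \<in> E3"
    using assms(2) unfolding graph_iso_def by blast
  have "{u, v} \<in> E1 \<longleftrightarrow> {(h \<circ> f) u, (h \<circ> f) v} \<in> E3" if "u \<in> A" "v \<in> A" for u v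
    using f_adj h_adj that bij_betw_apply[OF f] by simp
  then show ?thesis
    unfolding graph_iso_def using bij_betw_trans[OF f h] by blast
qed

lemma graph_iso_card: "graph_iso A E1 B E2 \<Longrightarrow> card A = card B"
  unfolding graph_iso_def using bij_betw_same_card by blast

lemma equiv_graph_iso_on: "equiv Q {(C, D). C \<in> Q \<and> D \<in> Q \<and> graph_iso C (F C) D (F D)}"
  unfolding equiv_def refl_on_def sym_def trans_def
  using graph_iso_refl graph_iso_sym graph_iso_trans by blast

lemma det_index_le: "edge_determining V E T \<Longrightarrow> det_index V E \<le> card T"
  unfolding det_index_def by (rule Least_le) blast

lemma det_index_attained:
  assumes "edge_determining V E T"
  obtains T' where "edge_determining V E T'" "card T' = det_index V E"
proof -
  have "\<exists>n T. edge_determining V E T \<and> card T = n"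
    using assms by blast
  from LeastI_ex[OF this] show ?thesis
    using that unfolding det_index_def by blast
qed

text \<open>Without a determining set the index is an unspecified LEAST value, hence the first premise.\<close>
lemma det_index_zero_imp_rigid:
  assumes "edge_determining V E T" "finite E" "det_index V E = 0" "is_aut V E \<phi>"
  shows "\<phi> = id"
proof -
  obtain T' where T': "edge_determining V E T'" "card T' = 0"
    using det_index_attained[OF assms(1)] assms(3) by metis
  moreover have "finite T'"
    using T'(1) assms(2) finite_subset by (auto simp: edge_determining_def)
  ultimately have "T' = {}"
    by simp
  then show ?thesis
    using T' assms(4) by (simp add: edge_determining_def)
qed

lemma card_le_card_quotient:
  assumes r: "equiv A r" and "finite A" and "B \<subseteq> A"
    and unrelated: "\<And>x y. x \<in> B \<Longrightarrow> y \<in> B \<Longrightarrow> (x, y) \<in> r \<Longrightarrow> x = y"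
  shows "card B \<le> card (A // r)"
proof (rule card_inj_on_le)
  show "inj_on (\<lambda>x. r `` {x}) B"
  proof (rule inj_onI)
    fix x y
    assume xy: "x \<in> B" "y \<in> B" "r `` {x} = r `` {y}"
    then have "(x, y) \<in> r"
      using eq_equiv_class_iff[OF r, of x y] \<open>B \<subseteq> A\<close> by auto
    then show "x = y"
      using unrelated xy by simp
  qed
  show "(\<lambda>x. r `` {x}) ` B \<subseteq> A // r"
    using \<open>B \<subseteq> A\<close> by (auto intro: quotientI)
  show "finite (A // r)"
    using finite_quotient[OF \<open>finite A\<close>] equiv_type[OF r] .
qed

lemma obtain_transversal:
  assumes r: "equiv A r"
  obtains U where "U \<subseteq> A" "card U = card (A // r)"
    "\<And>x. x \<in> A \<Longrightarrow> \<exists>u\<in>U. (x, u) \<in> r"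
    "\<And>u u'. u \<in> U \<Longrightarrow> u' \<in> U \<Longrightarrow> (u, u') \<in> r \<Longrightarrow> u = u'"
proof
  define rep where "rep X = (SOME x. x \<in> X)" for X :: "'a set"
  have rep: "rep X \<in> X" "X = r `` {rep X}" if X: "X \<in> A // r" for X
  proof -
    show "rep X \<in> X"
      using in_quotient_imp_non_empty[OF r X] unfolding rep_def by (simp add: some_in_eq)
    obtain x where "X = r `` {x}" "x \<in> A"
      using X by (rule quotientE)
    with \<open>rep X \<in> X\<close> show "X = r `` {rep X}"
      using equiv_class_eq[OF r] by blast
  qed
  have "inj_on rep (A // r)"
    using rep by (metis inj_onI)
  then show "card (rep ` (A // r)) = card (A // r)"
    by (rule card_image)
  show "rep ` (A // r) \<subseteq> A"
    using rep in_quotient_imp_subset[OF r] by blast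
  show "\<exists>u\<in>rep ` (A // r). (x, u) \<in> r" if "x \<in> A" for x
  proof
    show "rep (r `` {x}) \<in> rep ` (A // r)"
      using quotientI[OF that] by (rule imageI)
    show "(x, rep (r `` {x})) \<in> r"
      using rep(1)[OF quotientI[OF that]] by simp
  qed
  show "u = u'" if U: "u \<in> rep ` (A // r)" "u' \<in> rep ` (A // r)" and uu': "(u, u') \<in> r"
    for u u'
  proof -
    obtain X Y where "X \<in> A // r" "Y \<in> A // r" "u = rep X" "u' = rep Y"
      using U by blast
    moreover have "r `` {u} = r `` {u'}"
      using equiv_class_eq[OF r uu'] .
    ultimately have "X = Y"
      using rep(2) by simp
    then show ?thesis
      using \<open>u = rep X\<close> \<open>u' = rep Y\<close> by simp
  qed
qed

section \<open>Connected components\<close>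

locale finite_simple_graph =
  fixes V :: "'a set" and E :: "'a set set"
  assumes simple: "simple_graph V E"
begin

abbreviation edges_of :: "'a set \<Rightarrow> 'a set set" where
  "edges_of C \<equiv> induced_edges E C"

abbreviation component_det :: "'a set \<Rightarrow> nat" where
  "component_det C \<equiv> det_index C (edges_of C)"

definition component_of :: "'a \<Rightarrow> 'a set" where
  "component_of v = {u. (v, u) \<in> (adj_rel E)\<^sup>*}"

lemma finite_V: "finite V"
  using simple by (simp add: simple_graph_def)

lemma edge_doubleton: "e \<in> E \<Longrightarrow> \<exists>u v. u \<noteq> v \<and> u \<in> V \<and> v \<in> V \<and> e = {u, v}"
  using simple by (simp add: simple_graph_def)

lemma edgeD: "{u, v} \<in> E \<Longrightarrow> u \<in> V \<and> v \<in> V \<and> u \<noteq> v"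
  using edge_doubleton by (fastforce simp: doubleton_eq_iff)

lemma finite_E: "finite E"
proof -
  have "E \<subseteq> Pow V"
    using edge_doubleton by blast
  then show ?thesis
    using finite_V by (meson finite_Pow_iff finite_subset)
qed

lemma edge_nonempty: "e \<in> E \<Longrightarrow> e \<noteq> {}"
  using edge_doubleton by blast

lemma adj_rel_iff [simp]: "(u, v) \<in> adj_rel E \<longleftrightarrow> {u, v} \<in> E"
  by (simp add: adj_rel_def)

lemma sym_adj_rel: "sym (adj_rel E)"
  by (auto simp: sym_def insert_commute)

lemma reachable_sym: "(u, v) \<in> (adj_rel E)\<^sup>* \<Longrightarrow> (v, u) \<in> (adj_rel E)\<^sup>*"
  using sym_rtrancl[OF sym_adj_rel] by (meson symD)

lemma reachable_in_V: "(u, v) \<in> (adj_rel E)\<^sup>* \<Longrightarrow> u \<in> V \<Longrightarrow> v \<in> V"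
  by (induction rule: rtrancl_induct) (auto dest: edgeD)

lemma component_of_self: "v \<in> component_of v"
  by (simp add: component_of_def)

lemma component_of_eq:
  assumes "u \<in> component_of v"
  shows "component_of u = component_of v"
proof -
  have vu: "(v, u) \<in> (adj_rel E)\<^sup>*"
    using assms by (simp add: component_of_def)
  then have uv: "(u, v) \<in> (adj_rel E)\<^sup>*"
    by (rule reachable_sym)
  show ?thesis
    unfolding component_of_def using rtrancl_trans[OF vu] rtrancl_trans[OF uv] by blast
qed

lemma components_iff: "C \<in> components V E \<longleftrightarrow> (\<exists>v\<in>V. C = component_of v)"
  by (auto simp: components_def component_of_def)

lemma component_of_in_components: "v \<in> V \<Longrightarrow> component_of v \<in> components V E"
  using components_iff by blast

lemma component_subset: "C \<in> components V E \<Longrightarrow> C \<subseteq> V"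
  using reachable_in_V by (auto simp: components_iff component_of_def)

lemma component_nonempty: "C \<in> components V E \<Longrightarrow> C \<noteq> {}"
  using component_of_self by (auto simp: components_iff)

lemma components_eqI:
  assumes "C \<in> components V E" "D \<in> components V E" "x \<in> C" "x \<in> D"
  shows "C = D"
  using assms component_of_eq by (metis components_iff)

lemma finite_components: "finite (components V E)"
  using finite_V by (simp add: components_def)

lemma edge_in_component: "{u, v} \<in> E \<Longrightarrow> C \<in> components V E \<Longrightarrow> u \<in> C \<Longrightarrow> v \<in> C"
  unfolding components_iff component_of_def
  by (auto intro: rtrancl_into_rtrancl)

lemma no_edge_between_components:
  "C \<in> components V E \<Longrightarrow> u \<in> C \<Longrightarrow> v \<notin> C \<Longrightarrow> {u, v} \<notin> E"
  using edge_in_component by blast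

lemma edge_inside_or_outside:
  assumes "e \<in> E" "C \<in> components V E"
  shows "e \<subseteq> C \<or> e \<inter> C = {}"
proof -
  obtain u v where "e = {u, v}"
    using edge_doubleton assms(1) by blast
  then show ?thesis
    using edge_in_component[OF _ assms(2)] assms(1) by (auto simp: insert_commute)
qed

lemma induced_edges_mem [simp]: "{a, b} \<in> edges_of C \<longleftrightarrow> {a, b} \<in> E \<and> a \<in> C \<and> b \<in> C"
  by (simp add: induced_edges_def)

lemma induced_edges_subset: "edges_of C \<subseteq> E"
  by (auto simp: induced_edges_def)

lemma finite_induced_edges: "finite (edges_of C)"
  using finite_E induced_edges_subset finite_subset by blast

lemma induced_edges_disjoint:
  assumes "C \<in> components V E" "D \<in> components V E" "C \<noteq> D"
  shows "edges_of C \<inter> edges_of D = {}"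
proof (rule ccontr)
  assume "edges_of C \<inter> edges_of D \<noteq> {}"
  then obtain e where "e \<in> E" "e \<subseteq> C" "e \<subseteq> D"
    by (auto simp: induced_edges_def)
  then show False
    using edge_nonempty components_eqI[OF assms(1,2)] assms(3) by blast
qed

lemma component_of_isolated: "(\<forall>b. {v, b} \<notin> E) \<Longrightarrow> component_of v = {v}"
  unfolding component_of_def by (auto elim: converse_rtranclE)

lemma card_one_component_complete:
  assumes "card C = 1"
  shows "is_complete_graph 1 C (edges_of C)"
proof -
  obtain x where C: "C = {x}"
    using assms card_1_singletonE by blast
  have "edges_of C = {}"
    using edge_doubleton C by (fastforce simp: induced_edges_def)
  then show ?thesis
    unfolding is_complete_graph_def using C by auto
qed

lemma component_has_edge:
  assumes C: "C \<in> components V E" and "card C \<noteq> 1"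
  obtains e where "e \<in> edges_of C"
proof -
  obtain v where "v \<in> V" and Cv: "C = component_of v"
    using C by (auto simp: components_iff)
  have "\<exists>b. {v, b} \<in> E"
    using component_of_isolated assms(2) Cv by fastforce
  then obtain b where vb: "{v, b} \<in> E"
    by blast
  moreover have "v \<in> C" "b \<in> C"
    using Cv component_of_self edge_in_component[OF vb C] by auto
  ultimately show thesis
    using that[of "{v, b}"] by simp
qed

lemma K2_component:
  assumes vw: "{v, w} \<in> E"
    and only_w: "\<And>b. {v, b} \<in> E \<Longrightarrow> b = w" and only_v: "\<And>b. {w, b} \<in> E \<Longrightarrow> b = v"
  shows "is_complete_graph 2 (component_of v) (edges_of (component_of v))"
proof -
  have "v \<noteq> w"
    using edgeD vw by blast
  have "x \<in> {v, w}" if "(v, x) \<in> (adj_rel E)\<^sup>*" for x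
    using that by (induction rule: rtrancl_induct) (auto dest: only_w only_v)
  moreover have "(v, w) \<in> (adj_rel E)\<^sup>*"
    using vw by (simp add: r_into_rtrancl)
  ultimately have C: "component_of v = {v, w}"
    unfolding component_of_def by auto
  have "edges_of {v, w} = {{v, w}}"
    using vw edge_doubleton by (fastforce simp: induced_edges_def)
  moreover have "{e. \<exists>u u'. u \<noteq> u' \<and> u \<in> {v, w} \<and> u' \<in> {v, w} \<and> e = {u, u'}} = {{v, w}}"
    using \<open>v \<noteq> w\<close> by (auto simp: insert_commute)
  ultimately show ?thesis
    unfolding is_complete_graph_def C using \<open>v \<noteq> w\<close> by simp
qed

lemma is_aut_reachable:
  assumes \<phi>: "is_aut V E \<phi>" and "(a, b) \<in> (adj_rel E)\<^sup>*"
  shows "(\<phi> a, \<phi> b) \<in> (adj_rel E)\<^sup>*"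
  using assms(2)
proof (induction rule: rtrancl_induct)
  case (step y z)
  then have "{\<phi> y, \<phi> z} \<in> E"
    using is_aut_adj[OF \<phi>] edgeD by simp
  then show ?case
    using step.IH by (simp add: rtrancl.rtrancl_into_rtrancl)
qed simp

lemma is_aut_image_component_of:
  assumes \<phi>: "is_aut V E \<phi>" and v: "v \<in> V"
  shows "\<phi> ` component_of v = component_of (\<phi> v)"
proof
  have image_subset: "\<chi> ` component_of w \<subseteq> component_of (\<chi> w)" if "is_aut V E \<chi>" for \<chi> w
    using is_aut_reachable[OF that] by (auto simp: component_of_def)
  then show "\<phi> ` component_of v \<subseteq> component_of (\<phi> v)"
    using \<phi> .
  obtain \<psi> where \<psi>: "is_aut V E \<psi>" and \<phi>\<psi>: "\<And>x. x \<in> V \<Longrightarrow> \<phi> (\<psi> x) = x"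
    and \<psi>\<phi>: "\<And>x. x \<in> V \<Longrightarrow> \<psi> (\<phi> x) = x"
    using is_aut_inverse[OF \<phi>] by blast
  have "component_of (\<phi> v) \<subseteq> V"
    using component_subset component_of_in_components is_aut_mem[OF \<phi> v] by blast
  then have "component_of (\<phi> v) = \<phi> ` \<psi> ` component_of (\<phi> v)"
    using \<phi>\<psi> by (force simp: image_comp)
  also have "\<dots> \<subseteq> \<phi> ` component_of v"
    using image_subset[OF \<psi>, of "\<phi> v"] \<psi>\<phi>[OF v] by auto
  finally show "component_of (\<phi> v) \<subseteq> \<phi> ` component_of v" .
qed

lemma is_aut_image_component:
  "is_aut V E \<phi> \<Longrightarrow> C \<in> components V E \<Longrightarrow> \<phi> ` C \<in> components V E"
  using is_aut_image_component_of is_aut_mem by (fastforce simp: components_iff)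

lemma is_aut_component_iso:
  assumes \<phi>: "is_aut V E \<phi>" and C: "C \<in> components V E"
  shows "graph_iso C (edges_of C) (\<phi> ` C) (edges_of (\<phi> ` C))"
proof -
  have CV: "C \<subseteq> V"
    using component_subset C .
  have "bij_betw \<phi> C (\<phi> ` C)"
    using inj_on_subset[OF is_aut_inj_on[OF \<phi>] CV] by (simp add: bij_betw_def)
  moreover have "{u, v} \<in> edges_of C \<longleftrightarrow> {\<phi> u, \<phi> v} \<in> edges_of (\<phi> ` C)" if "u \<in> C" "v \<in> C" for u v
    using is_aut_adj[OF \<phi>] inj_on_image_mem_iff[OF is_aut_inj_on[OF \<phi>] _ CV] that CV
    by (auto simp del: induced_edges_mem simp add: induced_edges_mem)
  ultimately show ?thesis
    unfolding graph_iso_def by blast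
qed

lemma is_aut_fixes_component:
  assumes \<phi>: "is_aut V E \<phi>" and C: "C \<in> components V E"
    and e: "e \<in> edges_of C" and fixed: "fixes_edge \<phi> e"
  shows "\<phi> ` C = C"
proof -
  have "e \<in> E" "e \<subseteq> C"
    using e by (auto simp: induced_edges_def)
  then obtain x where "x \<in> C" "\<phi> x \<in> C"
    using fixed edge_nonempty by (fastforce simp: fixes_edge_def)
  then show ?thesis
    using components_eqI[OF is_aut_image_component[OF \<phi> C] C] by blast
qed

lemma is_aut_restrict_component:
  assumes \<phi>: "is_aut V E \<phi>" and C: "C \<in> components V E" and fixed: "\<phi> ` C = C"
  shows "is_aut C (edges_of C) (\<lambda>x. if x \<in> C then \<phi> x else x)"
proof -
  have CV: "C \<subseteq> V"
    using component_subset C .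
  have "bij_betw \<phi> C C"
    using inj_on_subset[OF is_aut_inj_on[OF \<phi>] CV] fixed by (simp add: bij_betw_def)
  then have "bij_betw (\<lambda>x. if x \<in> C then \<phi> x else x) C C"
    by (rule bij_betw_cong[THEN iffD1, rotated]) simp
  moreover have "{u, v} \<in> edges_of C \<longleftrightarrow> {\<phi> u, \<phi> v} \<in> edges_of C" if "u \<in> C" "v \<in> C" for u v
    using is_aut_adj[OF \<phi>] CV fixed that by auto
  ultimately show ?thesis
    unfolding is_aut_def by simp
qed

lemma is_aut_extend_component:
  assumes C: "C \<in> components V E" and \<psi>: "is_aut C (edges_of C) \<psi>"
  shows "is_aut V E \<psi>"
proof -
  have CV: "C \<subseteq> V"
    using component_subset C .
  have bij_C: "bij_betw \<psi> C C" and outside: "\<And>x. x \<notin> C \<Longrightarrow> \<psi> x = x"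
    using \<psi> by (simp_all add: is_aut_def)
  have inside: "\<psi> x \<in> C \<longleftrightarrow> x \<in> C" for x
    using bij_betw_apply[OF bij_C] outside by metis
  have "bij_betw \<psi> (V - C) (V - C)"
    by (rule bij_betw_cong[THEN iffD2, of _ _ id]) (auto simp: outside)
  then have "bij_betw \<psi> (C \<union> (V - C)) (C \<union> (V - C))"
    by (rule bij_betw_combine[OF bij_C]) blast
  moreover have "C \<union> (V - C) = V"
    using CV by auto
  moreover have "{u, v} \<in> E \<longleftrightarrow> {\<psi> u, \<psi> v} \<in> E" if "u \<in> V" "v \<in> V" for u v
  proof (cases "u \<in> C \<and> v \<in> C")
    case True
    then have "{u, v} \<in> edges_of C \<longleftrightarrow> {\<psi> u, \<psi> v} \<in> edges_of C"
      using \<psi> unfolding is_aut_def by blast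
    then show ?thesis
      using True inside by simp
  next
    case False
    have "{a, b} \<notin> E" "{b, a} \<notin> E" if "a \<in> C" "b \<notin> C" for a b
      using no_edge_between_components[OF C that] by (auto simp: insert_commute)
    with False show ?thesis
      using inside outside by (cases "u \<in> C"; cases "v \<in> C") simp_all
  qed
  ultimately show ?thesis
    unfolding is_aut_def using outside CV by auto
qed

lemma edge_determining_restrict:
  assumes T: "edge_determining V E T" and C: "C \<in> components V E"
  shows "edge_determining C (edges_of C) (T \<inter> edges_of C)"
  unfolding edge_determining_def
proof (intro conjI allI impI)
  fix \<psi>
  assume \<psi>: "is_aut C (edges_of C) \<psi> \<and> (\<forall>e\<in>T \<inter> edges_of C. fixes_edge \<psi> e)"
  have "fixes_edge \<psi> e" if "e \<in> T" for e
  proof (cases "e \<subseteq> C")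
    case True
    then show ?thesis
      using \<psi> that T by (auto simp: edge_determining_def induced_edges_def)
  next
    case False
    then have "e \<inter> C = {}"
      using edge_inside_or_outside[OF _ C] that T by (auto simp: edge_determining_def)
    then show ?thesis
      using \<psi> by (intro fixes_edgeI) (auto simp: is_aut_def)
  qed
  then show "\<psi> = id"
    using T is_aut_extend_component[OF C] \<psi> by (simp add: edge_determining_def)
qed simp

section \<open>The lower bound\<close>

lemma swap_isomorphic_components:
  assumes C: "C \<in> components V E" and D: "D \<in> components V E" and "C \<noteq> D"
    and iso: "graph_iso C (edges_of C) D (edges_of D)"
  obtains s where "is_aut V E s" "\<And>x. x \<notin> C \<Longrightarrow> x \<notin> D \<Longrightarrow> s x = x" "s \<noteq> id"
proof -
  obtain f where f: "bij_betw f C D"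
    and f_adj: "\<forall>u\<in>C. \<forall>v\<in>C. {u, v} \<in> edges_of C \<longleftrightarrow> {f u, f v} \<in> edges_of D"
    using iso unfolding graph_iso_def by blast
  define g where "g = inv_into C f"
  have g: "bij_betw g D C"
    unfolding g_def using f by (rule bij_betw_inv_into)
  have gf: "g (f x) = x" if "x \<in> C" for x
    unfolding g_def using f that by (rule bij_betw_inv_into_left)
  have fg: "f (g x) = x" if "x \<in> D" for x
    unfolding g_def using f that by (rule bij_betw_inv_into_right)
  have fC: "f x \<in> D" if "x \<in> C" for x
    using bij_betw_apply[OF f that] .
  have gD: "g x \<in> C" if "x \<in> D" for x
    using bij_betw_apply[OF g that] .
  have disj: "x \<notin> D" if "x \<in> C" for x
    using components_eqI[OF C D] \<open>C \<noteq> D\<close> that by blast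
  define s where "s x = (if x \<in> C then f x else if x \<in> D then g x else x)" for x
  have sC: "s x = f x" if "x \<in> C" for x
    using that s_def by simp
  have sD: "s x = g x" if "x \<in> D" for x
    using that s_def disj by auto
  have sO: "s x = x" if "x \<notin> C" "x \<notin> D" for x
    using that s_def by simp
  have inC: "s x \<in> C \<longleftrightarrow> x \<in> D" and inD: "s x \<in> D \<longleftrightarrow> x \<in> C" for x
    using disj fC gD by (cases "x \<in> C"; cases "x \<in> D"; auto simp: sC sD sO)+
  have ss: "s (s x) = x" for x
    by (cases "x \<in> C"; cases "x \<in> D") (auto simp: sC sD sO fC gD gf fg disj)
  have CV: "C \<subseteq> V" and DV: "D \<subseteq> V"
    using component_subset C D by auto
  have sV: "s x \<in> V" if "x \<in> V" for x
    using that CV DV fC gD by (cases "x \<in> C"; cases "x \<in> D") (auto simp: sC sD sO)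
  have "bij_betw s V V"
    by (rule bij_betw_byWitness[where f' = s]) (auto simp: ss sV)
  moreover have "s x = x" if "x \<notin> V" for x
    using that CV DV sO by blast
  moreover have "{u, v} \<in> E \<longleftrightarrow> {s u, s v} \<in> E" if "u \<in> V" "v \<in> V" for u v
  proof -
    have side: "a \<in> X \<longleftrightarrow> b \<in> X" if "{a, b} \<in> E" "X \<in> components V E" for a b X
      using edge_in_component[OF _ that(2)] that(1) by (metis insert_commute)
    consider "u \<in> C" "v \<in> C" | "u \<in> D" "v \<in> D" | "\<not> (u \<in> C \<and> v \<in> C)" "\<not> (u \<in> D \<and> v \<in> D)"
      by blast
    then show ?thesis
    proof cases
      case 1
      then show ?thesis
        using f_adj fC by (simp add: sC)
    next
      case 2
      then have "{g u, g v} \<in> edges_of C \<longleftrightarrow> {f (g u), f (g v)} \<in> edges_of D"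
        using f_adj gD by blast
      then show ?thesis
        using 2 gD by (simp add: sD fg)
    next
      case 3
      have "u \<notin> C \<and> v \<notin> C \<and> u \<notin> D \<and> v \<notin> D" if "{u, v} \<in> E \<or> {s u, s v} \<in> E"
        using that 3 side[OF _ C] side[OF _ D] inC inD by blast
      then show ?thesis
        using sO by metis
    qed
  qed
  ultimately have "is_aut V E s"
    unfolding is_aut_def by blast
  moreover obtain c where "c \<in> C"
    using component_nonempty[OF C] by blast
  then have "s \<noteq> id"
    using inD disj by force
  ultimately show thesis
    using that sO by blast
qed

lemma not_edge_determining_if_isomorphic_components_missed:
  assumes C: "C \<in> components V E" and D: "D \<in> components V E" and "C \<noteq> D"
    and iso: "graph_iso C (edges_of C) D (edges_of D)"
    and "T \<subseteq> E" and "T \<inter> edges_of C = {}" and "T \<inter> edges_of D = {}"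
  shows "\<not> edge_determining V E T"
proof -
  obtain s where s: "is_aut V E s" "s \<noteq> id" and s_outside: "\<And>x. x \<notin> C \<Longrightarrow> x \<notin> D \<Longrightarrow> s x = x"
    using swap_isomorphic_components[OF assms(1-4)] by blast
  have missed: "e \<inter> X = {}" if "e \<in> T" "X \<in> components V E" "T \<inter> edges_of X = {}" for e X
  proof -
    have "e \<in> E"
      using that(1) \<open>T \<subseteq> E\<close> by blast
    moreover have "\<not> e \<subseteq> X"
      using that(1,3) calculation by (auto simp: induced_edges_def)
    ultimately show ?thesis
      using edge_inside_or_outside[OF _ that(2)] by blast
  qed
  have "fixes_edge s e" if "e \<in> T" for e
    using missed[OF that C assms(6)] missed[OF that D assms(7)] s_outside
    by (intro fixes_edgeI) blast
  then show ?thesis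
    using s by (auto simp: edge_determining_def)
qed

definition det_components :: "'a set set" where
  "det_components = {C \<in> components V E. component_det C > 0}"

definition rigid_components :: "'a set set" where
  "rigid_components = {C \<in> components V E. component_det C = 0}"

definition rigid_iso :: "('a set \<times> 'a set) set" where
  "rigid_iso = {(C, D). C \<in> rigid_components \<and> D \<in> rigid_components \<and>
     graph_iso C (edges_of C) D (edges_of D)}"

lemma equiv_rigid_iso: "equiv rigid_components rigid_iso"
  unfolding rigid_iso_def by (rule equiv_graph_iso_on)

lemma finite_rigid_components: "finite rigid_components"
  using finite_components by (simp add: rigid_components_def)

lemma finite_det_components: "finite det_components"
  using finite_components by (simp add: det_components_def)

lemma sum_card_inter_induced_edges_le:
  assumes "F \<subseteq> components V E" "finite T"
  shows "(\<Sum>C\<in>F. card (T \<inter> edges_of C)) \<le> card T"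
proof -
  have "(\<Sum>C\<in>F. card (T \<inter> edges_of C)) = card (\<Union>C\<in>F. T \<inter> edges_of C)"
    using finite_subset[OF assms(1) finite_components] assms induced_edges_disjoint
    by (intro card_UN_disjoint[symmetric]) blast+
  also have "\<dots> \<le> card T"
    using assms(2) by (intro card_mono) auto
  finally show ?thesis .
qed

lemma edge_determining_card_lower_bound:
  assumes T: "edge_determining V E T"
  shows "(\<Sum>C\<in>det_components. component_det C) + card rigid_components
           \<le> card T + card (rigid_components // rigid_iso)"
proof -
  let ?P = det_components and ?Q = rigid_components
  define M where "M = {C \<in> ?Q. T \<inter> edges_of C \<noteq> {}}"
  have TE: "T \<subseteq> E"
    using T by (simp add: edge_determining_def)
  then have "finite T"
    using finite_E finite_subset by blast
  have "(\<Sum>C\<in>?P. component_det C) \<le> (\<Sum>C\<in>?P. card (T \<inter> edges_of C))"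
    using det_index_le edge_determining_restrict[OF T]
    by (intro sum_mono) (auto simp: det_components_def)
  moreover have "card M \<le> (\<Sum>C\<in>M. card (T \<inter> edges_of C))"
    using sum_mono[of M "\<lambda>_. 1" "\<lambda>C. card (T \<inter> edges_of C)"] \<open>finite T\<close>
    by (simp add: M_def Suc_le_eq card_gt_0_iff)
  moreover have "(\<Sum>C\<in>?P. card (T \<inter> edges_of C)) + (\<Sum>C\<in>M. card (T \<inter> edges_of C)) \<le> card T"
  proof -
    have "?P \<inter> M = {}"
      by (auto simp: det_components_def rigid_components_def M_def)
    then have "(\<Sum>C\<in>?P. card (T \<inter> edges_of C)) + (\<Sum>C\<in>M. card (T \<inter> edges_of C))
        = (\<Sum>C\<in>?P \<union> M. card (T \<inter> edges_of C))"
      using finite_det_components finite_rigid_components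
      by (intro sum.union_disjoint[symmetric]) (auto simp: M_def)
    also have "\<dots> \<le> card T"
      using \<open>finite T\<close>
      by (intro sum_card_inter_induced_edges_le) (auto simp: det_components_def rigid_components_def M_def)
    finally show ?thesis .
  qed
  moreover have "card (?Q - M) \<le> card (?Q // rigid_iso)"
  proof (rule card_le_card_quotient[OF equiv_rigid_iso finite_rigid_components])
    fix C D
    assume "C \<in> ?Q - M" "D \<in> ?Q - M" "(C, D) \<in> rigid_iso"
    then show "C = D"
      using not_edge_determining_if_isomorphic_components_missed[OF _ _ _ _ TE] T
      by (auto simp: M_def rigid_iso_def rigid_components_def)
  qed blast
  moreover have "card ?Q = card M + card (?Q - M)"
    using finite_rigid_components card_Diff_subset[of M ?Q] card_mono[of ?Q M]
    by (auto simp: M_def finite_subset)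
  ultimately show ?thesis
    by linarith
qed

end

section \<open>The upper bound\<close>

locale admissible_graph = finite_simple_graph +
  assumes at_most_one_K1: "card {C \<in> components V E. is_complete_graph 1 C (edges_of C)} \<le> 1"
    and no_K2: "\<forall>C \<in> components V E. \<not> is_complete_graph 2 C (edges_of C)"
begin

lemma card_one_components_eq:
  assumes "C \<in> components V E" "D \<in> components V E" "card C = 1" "card D = 1"
  shows "C = D"
proof (rule ccontr)
  let ?K1 = "{C \<in> components V E. is_complete_graph 1 C (edges_of C)}"
  assume "C \<noteq> D"
  have "{C, D} \<subseteq> ?K1"
    using assms card_one_component_complete by auto
  then have "card {C, D} \<le> card ?K1"
    using finite_components by (intro card_mono) auto
  then show False
    using at_most_one_K1 \<open>C \<noteq> D\<close> by simp
qed

lemma aut_fixing_all_edges_eq_id: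
  assumes \<phi>: "is_aut V E \<phi>" and fixed: "\<And>e. e \<in> E \<Longrightarrow> fixes_edge \<phi> e"
  shows "\<phi> = id"
proof -
  have branch: "\<phi> v = v" if "{v, a} \<in> E" "{v, b} \<in> E" "a \<noteq> b" for v a b
    using fixes_edge_doubletonD[OF fixed[OF that(1)]] fixes_edge_doubletonD[OF fixed[OF that(2)]] that(3)
    by auto
  have non_isolated: "\<phi> v = v" if vw: "{v, w} \<in> E" for v w
  proof (cases "\<exists>b. {v, b} \<in> E \<and> b \<noteq> w")
    case True
    then show ?thesis
      using branch vw by blast
  next
    case only_w: False
    have wv: "{w, v} \<in> E"
      using vw by (simp add: insert_commute)
    show ?thesis
    proof (cases "\<exists>b. {w, b} \<in> E \<and> b \<noteq> v")
      case True
      then have "\<phi> w = w"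
        using branch wv by blast
      moreover have "\<phi> v = v \<or> \<phi> v = w"
        using fixes_edge_doubletonD[OF fixed[OF vw]] .
      moreover have "\<phi> v \<noteq> \<phi> w"
        using inj_onD[OF is_aut_inj_on[OF \<phi>]] edgeD[OF vw] by metis
      ultimately show ?thesis
        by auto
    next
      case False
      then have "is_complete_graph 2 (component_of v) (edges_of (component_of v))"
        using K2_component[OF vw] only_w by blast
      then show ?thesis
        using no_K2 component_of_in_components edgeD[OF vw] by blast
    qed
  qed
  have "\<phi> v = v" if v: "v \<in> V" for v
  proof (rule ccontr)
    assume moved: "\<phi> v \<noteq> v"
    then have "{v, b} \<notin> E" for b
      using non_isolated by blast
    moreover have "{\<phi> v, b} \<notin> E" for b
      using non_isolated inj_onD[OF is_aut_inj_on[OF \<phi>] _ is_aut_mem[OF \<phi> v] v] moved by blast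
    ultimately have "component_of v = {v}" "component_of (\<phi> v) = {\<phi> v}"
      by (simp_all add: component_of_isolated)
    then have "component_of v = component_of (\<phi> v)"
      using card_one_components_eq[OF component_of_in_components[OF v]
          component_of_in_components[OF is_aut_mem[OF \<phi> v]]] by simp
    then show False
      using \<open>component_of v = {v}\<close> \<open>component_of (\<phi> v) = {\<phi> v}\<close> moved by simp
  qed
  then show ?thesis
    using is_aut_eq_id[OF \<phi>] by blast
qed

lemma edge_determining_all_edges: "edge_determining V E E"
  using aut_fixing_all_edges_eq_id by (auto simp: edge_determining_def)

lemma component_edge_determining:
  "C \<in> components V E \<Longrightarrow> edge_determining C (edges_of C) (edges_of C)"
  using edge_determining_restrict[OF edge_determining_all_edges] by (simp add: Int_absorb1 induced_edges_subset)

lemma rigid_component_aut_eq_id: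
  "C \<in> rigid_components \<Longrightarrow> is_aut C (edges_of C) \<psi> \<Longrightarrow> \<psi> = id"
  using det_index_zero_imp_rigid[OF component_edge_determining finite_induced_edges]
  by (auto simp: rigid_components_def)

lemma aut_eq_id_if_components_fixed:
  assumes \<phi>: "is_aut V E \<phi>"
    and fixed: "\<And>C. C \<in> components V E \<Longrightarrow> \<phi> ` C = C"
    and determined: "\<And>C. C \<in> det_components \<Longrightarrow>
           \<exists>T. edge_determining C (edges_of C) T \<and> (\<forall>e\<in>T. fixes_edge \<phi> e)"
  shows "\<phi> = id"
proof (rule is_aut_eq_id[OF \<phi>])
  fix x
  assume "x \<in> V"
  define C where "C = component_of x"
  have C: "C \<in> components V E" "x \<in> C"
    using component_of_in_components[OF \<open>x \<in> V\<close>] component_of_self by (simp_all add: C_def)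
  define \<psi> where "\<psi> = (\<lambda>y. if y \<in> C then \<phi> y else y)"
  have \<psi>: "is_aut C (edges_of C) \<psi>"
    unfolding \<psi>_def using is_aut_restrict_component[OF \<phi> C(1) fixed[OF C(1)]] .
  have "\<psi> = id"
  proof (cases "C \<in> det_components")
    case True
    then obtain T where T: "edge_determining C (edges_of C) T" and T_fixed: "\<forall>e\<in>T. fixes_edge \<phi> e"
      using determined by blast
    have "fixes_edge \<psi> e" if "e \<in> T" for e
    proof -
      have "e \<subseteq> C"
        using T that by (auto simp: edge_determining_def induced_edges_def)
      then have "\<psi> ` e = \<phi> ` e"
        unfolding \<psi>_def by (intro image_cong) auto
      then show ?thesis
        using T_fixed that by (simp add: fixes_edge_def)
    qed
    then show ?thesis
      using T \<psi> by (simp add: edge_determining_def)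
  next
    case False
    then have "C \<in> rigid_components"
      using C(1) by (auto simp: det_components_def rigid_components_def)
    then show ?thesis
      using rigid_component_aut_eq_id \<psi> by blast
  qed
  then show "\<phi> x = x"
    using C(2) \<psi>_def by (metis id_apply)
qed

lemma edge_determining_from_transversal:
  assumes U: "U \<subseteq> rigid_components"
    and U_distinct: "\<And>u u'. u \<in> U \<Longrightarrow> u' \<in> U \<Longrightarrow> (u, u') \<in> rigid_iso \<Longrightarrow> u = u'"
    and TC: "\<And>C. C \<in> det_components \<Longrightarrow> edge_determining C (edges_of C) (TC C)"
    and ed: "\<And>C. C \<in> rigid_components - U \<Longrightarrow> ed C \<in> edges_of C"
  shows "edge_determining V E ((\<Union>C\<in>det_components. TC C) \<union> ed ` (rigid_components - U))"
    (is "edge_determining V E ?T")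
  unfolding edge_determining_def
proof (intro conjI allI impI)
  let ?marked = "det_components \<union> (rigid_components - U)"
  have TC_sub: "TC C \<subseteq> edges_of C" if "C \<in> det_components" for C
    using TC[OF that] by (simp add: edge_determining_def)
  show "?T \<subseteq> E"
    using TC_sub ed induced_edges_subset by blast
  fix \<phi>
  assume "is_aut V E \<phi> \<and> (\<forall>e\<in>?T. fixes_edge \<phi> e)"
  then have \<phi>: "is_aut V E \<phi>" and T_fixed: "\<And>e. e \<in> ?T \<Longrightarrow> fixes_edge \<phi> e"
    by auto
  have marked_fixed: "\<phi> ` C = C" if "C \<in> ?marked" for C
  proof (cases "C \<in> det_components")
    case True
    have "TC C \<noteq> {}"
      using det_index_le[OF TC[OF True]] True by (auto simp: det_components_def)
    then obtain e where e: "e \<in> TC C"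
      by blast
    have "C \<in> components V E"
      using True by (simp add: det_components_def)
    moreover have "e \<in> ?T"
      using e True by blast
    ultimately show ?thesis
      using is_aut_fixes_component[OF \<phi> _ _ T_fixed] TC_sub[OF True] e by blast
  next
    case False
    then have "C \<in> rigid_components - U"
      using that by blast
    then show ?thesis
      using is_aut_fixes_component[OF \<phi> _ ed T_fixed] by (auto simp: rigid_components_def)
  qed
  have "\<phi> ` C = C" if C: "C \<in> components V E" for C
  proof (cases "C \<in> ?marked")
    case True
    then show ?thesis
      using marked_fixed by blast
  next
    case False
    then have "C \<in> U"
      using C by (auto simp: det_components_def rigid_components_def)
    have D: "\<phi> ` C \<in> components V E"
      using is_aut_image_component[OF \<phi> C] .
    have "\<phi> ` C \<notin> ?marked"
    proof
      assume "\<phi> ` C \<in> ?marked"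
      then have "\<phi> ` (\<phi> ` C) = \<phi> ` C"
        using marked_fixed by blast
      then have "\<phi> ` C = C"
        using inj_on_image_eq_iff[OF is_aut_inj_on[OF \<phi>] component_subset[OF D] component_subset[OF C]]
        by simp
      then show False
        using False \<open>\<phi> ` C \<in> ?marked\<close> by simp
    qed
    then have "\<phi> ` C \<in> U"
      using D by (auto simp: det_components_def rigid_components_def)
    moreover have "(C, \<phi> ` C) \<in> rigid_iso"
      using is_aut_component_iso[OF \<phi> C] U \<open>C \<in> U\<close> calculation by (auto simp: rigid_iso_def)
    ultimately show ?thesis
      using U_distinct \<open>C \<in> U\<close> by blast
  qed
  moreover have "\<exists>T. edge_determining C (edges_of C) T \<and> (\<forall>e\<in>T. fixes_edge \<phi> e)"
    if "C \<in> det_components" for C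
    using TC[OF that] T_fixed that by blast
  ultimately show "\<phi> = id"
    using aut_eq_id_if_components_fixed[OF \<phi>] by blast
qed

lemma edge_determining_card_upper_bound:
  obtains T where "edge_determining V E T"
    "card T + card (rigid_components // rigid_iso)
       \<le> (\<Sum>C\<in>det_components. component_det C) + card rigid_components"
proof -
  obtain U where U: "U \<subseteq> rigid_components" "card U = card (rigid_components // rigid_iso)"
    and U_cover: "\<And>C. C \<in> rigid_components \<Longrightarrow> \<exists>u\<in>U. (C, u) \<in> rigid_iso"
    and U_distinct: "\<And>u u'. u \<in> U \<Longrightarrow> u' \<in> U \<Longrightarrow> (u, u') \<in> rigid_iso \<Longrightarrow> u = u'"
    using obtain_transversal[OF equiv_rigid_iso] by blast
  have "\<forall>C\<in>det_components. \<exists>T. edge_determining C (edges_of C) T \<and> card T = component_det C"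
    using det_index_attained[OF component_edge_determining] by (metis det_components_def mem_Collect_eq)
  then obtain TC where TC: "\<And>C. C \<in> det_components \<Longrightarrow>
      edge_determining C (edges_of C) (TC C) \<and> card (TC C) = component_det C"
    by metis
  have "\<exists>e. e \<in> edges_of C" if C: "C \<in> rigid_components - U" for C
  proof -
    obtain u where "u \<in> U" "(C, u) \<in> rigid_iso"
      using U_cover C by blast
    then have u: "u \<noteq> C" "graph_iso C (edges_of C) u (edges_of u)" "u \<in> components V E"
      using C by (auto simp: rigid_iso_def rigid_components_def)
    have "card C \<noteq> 1"
    proof
      assume "card C = 1"
      then have "card u = 1"
        using graph_iso_card[OF u(2)] by simp
      then show False
        using card_one_components_eq[OF _ u(3) \<open>card C = 1\<close>] u(1) C
        by (auto simp: rigid_components_def)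
    qed
    moreover have "C \<in> components V E"
      using C by (simp add: rigid_components_def)
    ultimately show ?thesis
      using component_has_edge by blast
  qed
  then obtain ed where ed: "\<And>C. C \<in> rigid_components - U \<Longrightarrow> ed C \<in> edges_of C"
    by metis
  let ?T = "(\<Union>C\<in>det_components. TC C) \<union> ed ` (rigid_components - U)"
  have "edge_determining V E ?T"
    using edge_determining_from_transversal[OF U(1) U_distinct] TC ed by blast
  moreover have "card ?T \<le> card (\<Union>C\<in>det_components. TC C) + card (ed ` (rigid_components - U))"
    by (rule card_Un_le)
  moreover have "card (\<Union>C\<in>det_components. TC C) \<le> (\<Sum>C\<in>det_components. card (TC C))"
    using finite_det_components by (rule card_UN_le)
  moreover have "card (ed ` (rigid_components - U)) \<le> card (rigid_components - U)"
    using finite_rigid_components by (intro card_image_le) simp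
  moreover have "(\<Sum>C\<in>det_components. card (TC C)) = (\<Sum>C\<in>det_components. component_det C)"
    using TC by simp
  moreover have "card (rigid_components - U) + card U = card rigid_components"
    using U(1) finite_rigid_components card_Diff_subset[of U rigid_components]
      card_mono[of rigid_components U] finite_subset[of U rigid_components]
    by simp
  ultimately show thesis
    using that[of ?T] U(2) by linarith
qed

theorem det_index_eq:
  "int (det_index V E) = int (card rigid_components) - int (card (rigid_components // rigid_iso))
     + (\<Sum>C\<in>det_components. int (component_det C))"
proof -
  obtain T where T: "edge_determining V E T" "card T = det_index V E"
    using det_index_attained[OF edge_determining_all_edges] .
  obtain T' where T': "edge_determining V E T'"
    "card T' + card (rigid_components // rigid_iso)
       \<le> (\<Sum>C\<in>det_components. component_det C) + card rigid_components"
    using edge_determining_card_upper_bound .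
  have "det_index V E \<le> card T'"
    using det_index_le[OF T'(1)] .
  moreover have "(\<Sum>C\<in>det_components. component_det C) + card rigid_components
      \<le> det_index V E + card (rigid_components // rigid_iso)"
    using edge_determining_card_lower_bound[OF T(1)] T(2) by simp
  moreover have "(\<Sum>C\<in>det_components. int (component_det C)) = int (\<Sum>C\<in>det_components. component_det C)"
    by simp
  ultimately show ?thesis
    using T'(2) by linarith
qed

end

theorem lemma1:
  fixes V :: "'a set" and E :: "'a set set"
  assumes "simple_graph V E"
    and "card {C \<in> components V E. is_complete_graph 1 C (induced_edges E C)} \<le> 1"
    and "\<forall>C \<in> components V E. \<not> is_complete_graph 2 C (induced_edges E C)"
  defines "P \<equiv> {C \<in> components V E. det_index C (induced_edges E C) > 0}"
    and "Q \<equiv> {C \<in> components V E. det_index C (induced_edges E C) = 0}"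
  defines "R \<equiv> Q // {(C, D). C \<in> Q \<and> D \<in> Q \<and>
                 graph_iso C (induced_edges E C) D (induced_edges E D)}"
  shows "int (det_index V E) =
           int (card Q) - int (card R) + (\<Sum>C\<in>P. int (det_index C (induced_edges E C)))"
proof -
  interpret admissible_graph V E
    using assms(1-3) by unfold_locales
  show ?thesis
    using det_index_eq
    unfolding P_def Q_def R_def det_components_def rigid_components_def rigid_iso_def .
qed

end
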